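(* Consider the Ising model $H(\sigma)=-J\sum_{\langle x,y\rangle}\sigma(x)\sigma(y)$ on the Cayley tree $\tau^k$ with $\theta=\tanh(J\beta)$ and $\alpha=\frac{1-\theta}{1+\theta}$, and let $A\subset N_k=\{1,\dots,k+1\}$ with $|A|=k$. Suppose $k\ge 6$ and $\alpha>1$, and let $\alpha_{1,2}=\frac{k-1\pm\sqrt{k^2-6k+1}}{2}$. Then: 1) if $\alpha\in(\alpha_1,\alpha_2)$, there exist at least three $H_A$-weakly periodic Gibbs measures; 2) if $\alpha\notin(\alpha_1,\alpha_2)$, there exists at least one $H_A$-weakly periodic Gibbs measure.
   Context: $\tau^k=(V,L)$ is the Cayley tree of order $k\ge1$ (every vertex has $k+1$ neighbours). Its vertices are identified with the group $G_k$, the free product of $k+1$ cyclic groups of order two with generators $a_1,\dots,a_{k+1}$ ($a_i^2=e$), so that $x,y$ are neighbours iff $x=ya_i$ for some $i$; the root is $e$. For $x\in G_k$, $S(x)$ denotes the set of direct successors of $x$ (neighbours farther from $e$), and $x_\downarrow$ denotes the unique neighbour of $x$ not in $S(x)$. Spins take values $\sigma(x)\in\{-1,1\}$, $J\in\mathbb R$, $\beta=1/T>0$. Gibbs measures are constructed from boundary fields $h=\{h_x\in\mathbb R: x\in G_k\}$ via $\mu_n(\sigma_n)=Z_n^{-1}\exp\{-\beta H(\sigma_n)+\sum_{x\in W_n}h_x\sigma(x)\}$ on balls $V_n$ (with $W_n$ the sphere of radius $n$); these are consistent (and define a limiting Gibbs measure) iff $h_x=\sum_{y\in S(x)}f(h_y,\theta)$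 for all $x$, where $f(h,\theta)=\operatorname{arcth}(\theta\tanh h)$. Distinct such $h$ give distinct measures. For $\emptyset\ne A\subseteq N_k$, $H_A=\{x\in G_k:\sum_{i\in A}w_x(a_i)\text{ is even}\}$, where $w_x(a_i)$ is the number of letters $a_i$ in the (reduced) word $x$; it is a normal subgroup of index 2. A collection $h$ is $H_A$-weakly periodic if $h_x$ depends only on whether $x\in H_A$ and whether $x_\downarrow\in H_A$: $h_x=h_1$ if $x\in H_A,x_\downarrow\in H_A$; $h_2$ if $x\in H_A,x_\downarrow\notin H_A$; $h_3$ if $x\notin H_A,x_\downarrow\in H_A$; $h_4$ if $x\notin H_A,x_\downarrow\notin H_A$. A Gibbs measure is $H_A$-weakly periodic if it corresponds to such an $h$. For $|A|=k$ the consistency condition becomes the system $h_1=kf(h_3,\theta)$, $h_2=(k-1)f(h_3,\theta)+f(h_1,\theta)$, $h_3=(k-1)f(h_2,\theta)+f(h_4,\theta)$, $h_4=kf(h_2,\theta)$, and $H_A$-weakly periodic Gibbs measures correspond bijectively to its solutions $(h_1,h_2,h_3,h_4)\in\mathbb R^4$. *)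

theory Defs
  imports Complex_Main
begin

text \<open>Vertices of the Cayley tree of order k = elements of G_k = reduced words over the
generators a_1..a_{k+1} (a_i^2 = e).\<close>

definition cayley_vertices :: "nat \<Rightarrow> nat list set" where
  "cayley_vertices k = {x. set x \<subseteq> {1..k+1} \<and>
      (\<forall>j. Suc j < length x \<longrightarrow> x ! j \<noteq> x ! Suc j)}"

text \<open>Direct successors S(x): neighbours x a_i farther from the root, i.e. x with a letter
i appended, i different from the last letter of x.\<close>
definition successors :: "nat \<Rightarrow> nat list \<Rightarrow> nat list set" where
  "successors k x = {x @ [i] | i. i \<in> {1..k+1} \<and> (x = [] \<or> i \<noteq> last x)}"

text \<open>x_down: the unique neighbour of x (x \<noteq> e) that is not a successor.\<close>
definition pred_vertex :: "nat list \<Rightarrow> nat list" where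
  "pred_vertex x = butlast x"

definition letter_count :: "nat list \<Rightarrow> nat \<Rightarrow> nat" where
  "letter_count x i = count_list x i"

definition H_sub :: "nat \<Rightarrow> nat set \<Rightarrow> nat list set" where
  "H_sub k A = {x \<in> cayley_vertices k. even (\<Sum>i\<in>A. letter_count x i)}"

definition f_ising :: "real \<Rightarrow> real \<Rightarrow> real" where
  "f_ising h \<theta> = artanh (\<theta> * tanh h)"

definition consistent_field :: "nat \<Rightarrow> real \<Rightarrow> (nat list \<Rightarrow> real) \<Rightarrow> bool" where
  "consistent_field k \<theta> h \<longleftrightarrow>
     (\<forall>x \<in> cayley_vertices k. h x = (\<Sum>y\<in>successors k x. f_ising (h y) \<theta>))"

definition weakly_periodic :: "nat \<Rightarrow> nat set \<Rightarrow> (nat list \<Rightarrow> real) \<Rightarrow> bool" where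
  "weakly_periodic k A h \<longleftrightarrow>
     (\<exists>h1 h2 h3 h4. \<forall>x \<in> cayley_vertices k. x \<noteq> [] \<longrightarrow>
        h x = (if x \<in> H_sub k A then (if pred_vertex x \<in> H_sub k A then h1 else h2)
               else (if pred_vertex x \<in> H_sub k A then h3 else h4)))"

text \<open>Boundary fields of H_A-weakly periodic Gibbs measures (restricted to the vertex set;
distinct such fields give distinct Gibbs measures).\<close>
definition wp_gibbs_fields :: "nat \<Rightarrow> nat set \<Rightarrow> real \<Rightarrow> (nat list \<Rightarrow> real) set" where
  "wp_gibbs_fields k A \<theta> =
     {h. consistent_field k \<theta> h \<and> weakly_periodic k A h \<and>
         (\<forall>x. x \<notin> cayley_vertices k \<longrightarrow> h x = 0)}"

end

theory Submission
  imports Defs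
begin

text \<open>A field taking four values according to whether \<open>x\<close> and \<open>x\<^sub>\<down>\<close> lie in
  \<open>H\<^sub>A\<close> is consistent as soon as the values solve the four-equation system, because
  appending a letter \<open>a\<^sub>i\<close> changes \<open>H\<^sub>A\<close>-membership iff \<open>i \<in> A\<close>. The zero
  field always solves it. Since \<open>f\<close> is odd, the ansatz \<open>(-k f(h), h, -h, k f(h))\<close> reduces the
  system to the single equation \<open>h = -(k-1) f(h) - f(k f(h))\<close>, whose bounded right-hand side
  has slope \<open>-(k-1)\<theta> - k\<theta>\<^sup>2\<close> at \<open>0\<close>. This slope exceeds \<open>1\<close> exactly when
  \<open>\<alpha>\<close> lies between the roots \<open>\<alpha>\<^sub>1, \<alpha>\<^sub>2\<close>, and then the equation has a root
  \<open>h > 0\<close>; the solutions for \<open>h\<close> and \<open>-h\<close> differ from each other and from zero.\<close>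

lemma artanh_real_mono:
  fixes x y :: real
  assumes "-1 < x" "x \<le> y" "y < 1"
  shows "artanh x \<le> artanh y"
proof -
  have "(1 + x) * (1 - y) \<le> (1 + y) * (1 - x)" using assms by (simp add: algebra_simps)
  then have "(1 + x) / (1 - x) \<le> (1 + y) / (1 - y)" using assms by (simp add: divide_simps)
  moreover have "0 < (1 + x) / (1 - x)" using assms by simp
  ultimately show ?thesis unfolding artanh_def by simp
qed

lemma abs_mult_tanh_less_1: "\<bar>\<theta>\<bar> < 1 \<Longrightarrow> \<bar>\<theta> * tanh (x::real)\<bar> < 1"
  using abs_mult_less[of \<theta> 1 "tanh x" 1] tanh_real_bounds[of x] by (auto simp: abs_mult)

lemma f_ising_0 [simp]: "f_ising 0 \<theta> = 0"
  by (simp add: f_ising_def)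

lemma f_ising_minus: "\<bar>\<theta>\<bar> < 1 \<Longrightarrow> f_ising (- h) \<theta> = - f_ising h \<theta>"
  unfolding f_ising_def using abs_mult_tanh_less_1[of \<theta> h] by simp

lemma abs_f_ising_le:
  assumes "\<bar>\<theta>\<bar> < 1"
  shows "\<bar>f_ising h \<theta>\<bar> \<le> artanh \<bar>\<theta>\<bar>"
proof -
  have "\<bar>\<theta> * tanh h\<bar> \<le> \<bar>\<theta>\<bar>"
    using tanh_real_bounds[of h] by (auto simp: abs_mult intro: mult_left_le)
  then have "artanh (- \<bar>\<theta>\<bar>) \<le> artanh (\<theta> * tanh h)" "artanh (\<theta> * tanh h) \<le> artanh \<bar>\<theta>\<bar>"
    using assms by (intro artanh_real_mono; linarith)+
  moreover have "artanh (- \<bar>\<theta>\<bar>) = - artanh \<bar>\<theta>\<bar>" using assms by simp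
  ultimately show ?thesis unfolding f_ising_def abs_le_iff by linarith
qed

lemma f_ising_has_field_derivative:
  assumes "\<bar>\<theta>\<bar> < 1"
  shows "((\<lambda>h. f_ising h \<theta>) has_field_derivative
           \<theta> * (1 - tanh x ^ 2) / (1 - (\<theta> * tanh x) ^ 2)) (at x)"
proof -
  have "((\<lambda>h. \<theta> * tanh h) has_field_derivative \<theta> * (1 - tanh x ^ 2)) (at x)"
    by (auto intro!: derivative_eq_intros)
  from DERIV_chain2[OF artanh_real_has_field_derivative[OF abs_mult_tanh_less_1[OF assms]] this]
  show ?thesis unfolding f_ising_def by simp
qed

lemma isCont_f_ising: "\<bar>\<theta>\<bar> < 1 \<Longrightarrow> isCont (\<lambda>h. f_ising h \<theta>) x"
  using f_ising_has_field_derivative DERIV_isCont by blast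

lemma positive_root_of_deriv_pos:
  fixes g :: "real \<Rightarrow> real"
  assumes "g 0 = 0" and "(g has_real_derivative D) (at 0)" and "D > 0"
    and "B > 0" and "g B < 0" and "\<And>x. isCont g x"
  shows "\<exists>x>0. g x = 0"
proof -
  obtain d where "d > 0" and inc: "\<And>h. 0 < h \<Longrightarrow> h < d \<Longrightarrow> g 0 < g h"
    using DERIV_pos_inc_right[OF assms(2,3)] by auto
  define e where "e = min (d / 2) B"
  have "0 < e" "e \<le> B" "g e > 0"
    using \<open>d > 0\<close> assms(1,4) inc[of e] by (auto simp: e_def)
  then obtain x where "e \<le> x" "g x = 0"
    using IVT2[of g B 0 e] assms(5,6) by auto
  with \<open>0 < e\<close> show ?thesis by (meson order_less_le_trans)
qed

lemma f_ising_positive_fixed_point: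
  fixes k \<theta> :: real
  assumes "\<bar>\<theta>\<bar> < 1" and "-(k - 1) * \<theta> - k * \<theta>\<^sup>2 > 1"
  shows "\<exists>h>0. h = -(k - 1) * f_ising h \<theta> - f_ising (k * f_ising h \<theta>) \<theta>"
proof -
  define F where "F h = f_ising h \<theta>" for h
  define g where "g h = -(k - 1) * F h - F (k * F h) - h" for h
  have dF: "(F has_field_derivative \<theta> * (1 - tanh x ^ 2) / (1 - (\<theta> * tanh x) ^ 2)) (at x)" for x
    unfolding F_def using f_ising_has_field_derivative[OF assms(1)] .
  have dF0: "(F has_field_derivative \<theta>) (at 0)"
    using dF[of 0] by simp
  have dFF: "((\<lambda>h. F (k * F h)) has_field_derivative \<theta> * (k * \<theta>)) (at 0)"
    using DERIV_chain2[OF dF[of "k * F 0"] DERIV_cmult[OF dF0, of k]] by (simp add: F_def)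
  have "(g has_field_derivative -(k - 1) * \<theta> - \<theta> * (k * \<theta>) - 1) (at 0)"
    unfolding g_def[abs_def]
    by (intro DERIV_diff DERIV_cmult DERIV_ident dF0 dFF)
  then have dg: "(g has_field_derivative -(k - 1) * \<theta> - k * \<theta>\<^sup>2 - 1) (at 0)"
    by (simp add: power2_eq_square algebra_simps)
  define M where "M = artanh \<bar>\<theta>\<bar>"
  have "0 \<le> M" using artanh_real_mono[of 0 "\<bar>\<theta>\<bar>"] assms(1) by (simp add: M_def)
  have bound: "\<bar>F h\<bar> \<le> M" for h
    unfolding F_def M_def using abs_f_ising_le[OF assms(1)] .
  define B where "B = \<bar>k - 1\<bar> * M + M + 1"
  have "\<bar>(k - 1) * F B\<bar> \<le> \<bar>k - 1\<bar> * M"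
    unfolding abs_mult using bound by (intro mult_left_mono) auto
  then have "-(k - 1) * F B \<le> \<bar>k - 1\<bar> * M"
    using abs_ge_minus_self[of "(k - 1) * F B"] by linarith
  moreover have "- F (k * F B) \<le> M" using bound[of "k * F B"] by linarith
  ultimately have "g B < 0" by (simp add: g_def B_def)
  moreover have "0 < B"
    using mult_nonneg_nonneg[OF abs_ge_zero \<open>0 \<le> M\<close>, of "k - 1"] \<open>0 \<le> M\<close> unfolding B_def by linarith
  moreover have "g 0 = 0" by (simp add: g_def F_def)
  moreover have "isCont g x" for x
  proof -
    have cF: "isCont F y" for y unfolding F_def using isCont_f_ising[OF assms(1)] .
    have "isCont (\<lambda>h. F (k * F h)) x" by (rule isCont_o2[OF _ cF]) (intro continuous_intros cF)
    then show ?thesis unfolding g_def[abs_def] by (intro continuous_intros cF)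
  qed
  ultimately obtain h where "h > 0" "g h = 0"
    using positive_root_of_deriv_pos[of g, OF _ dg] assms(2) by (metis diff_gt_0_iff_gt)
  then show ?thesis by (auto simp: g_def F_def)
qed

definition even_letters :: "nat set \<Rightarrow> nat list \<Rightarrow> bool" where
  "even_letters A x \<longleftrightarrow> even (\<Sum>i\<in>A. count_list x i)"

lemma H_sub_iff: "x \<in> H_sub k A \<longleftrightarrow> x \<in> cayley_vertices k \<and> even_letters A x"
  by (simp add: H_sub_def even_letters_def letter_count_def)

lemma even_letters_Nil [simp]: "even_letters A []"
  by (simp add: even_letters_def)

lemma even_letters_snoc:
  assumes "finite A"
  shows "even_letters A (x @ [i]) \<longleftrightarrow> (even_letters A x \<longleftrightarrow> i \<notin> A)"
proof -
  have "count_list (x @ [i]) a = count_list x a + (if i = a then 1 else 0)" for a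
    by simp
  then have "(\<Sum>a\<in>A. count_list (x @ [i]) a) = (\<Sum>a\<in>A. count_list x a) + (\<Sum>a\<in>A. if i = a then 1 else 0)"
    by (simp add: sum.distrib)
  also have "(\<Sum>a\<in>A. if i = a then 1 else 0 :: nat) = (if i \<in> A then 1 else 0)"
    using assms by simp
  finally show ?thesis unfolding even_letters_def by auto
qed

lemma cayley_vertices_snoc:
  assumes "x \<in> cayley_vertices k" and "i \<in> {1..k+1}" and "x = [] \<or> i \<noteq> last x"
  shows "x @ [i] \<in> cayley_vertices k"
  unfolding cayley_vertices_def
proof (intro CollectI conjI allI impI)
  show "set (x @ [i]) \<subseteq> {1..k+1}" using assms by (auto simp: cayley_vertices_def)
  fix m assume m: "Suc m < length (x @ [i])"
  show "(x @ [i]) ! m \<noteq> (x @ [i]) ! Suc m"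
  proof (cases "Suc m < length x")
    case True
    then show ?thesis using assms(1) by (auto simp: cayley_vertices_def nth_append)
  next
    case False
    then have "Suc m = length x" using m by simp
    moreover from this have "last x = x ! m"
      by (metis diff_Suc_1 last_conv_nth length_greater_0_conv zero_less_Suc)
    ultimately show ?thesis using assms(3) by (auto simp: nth_append)
  qed
qed

lemma cayley_vertices_butlast: "x \<in> cayley_vertices k \<Longrightarrow> butlast x \<in> cayley_vertices k"
  unfolding cayley_vertices_def by (auto simp: nth_butlast dest: in_set_butlastD)

lemma last_in_generators:
  "x \<in> cayley_vertices k \<Longrightarrow> x \<noteq> [] \<Longrightarrow> last x \<in> {1..k+1}"
  unfolding cayley_vertices_def using last_in_set by blast

definition successor_letters :: "nat \<Rightarrow> nat list \<Rightarrow> nat set" where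
  "successor_letters k x = {i \<in> {1..k+1}. x = [] \<or> i \<noteq> last x}"

lemma successor_letters_eq:
  "successor_letters k x = (if x = [] then {1..k+1} else {1..k+1} - {last x})"
  by (auto simp: successor_letters_def)

lemma sum_successors:
  "(\<Sum>y\<in>successors k x. g y) = (\<Sum>i\<in>successor_letters k x. g (x @ [i]))"
proof -
  have "successors k x = (\<lambda>i. x @ [i]) ` successor_letters k x"
    unfolding successors_def successor_letters_def by blast
  moreover have "inj_on (\<lambda>i. x @ [i]) (successor_letters k x)"
    by (auto simp: inj_on_def)
  ultimately show ?thesis by (simp add: sum.reindex)
qed

definition weak_value :: "real \<Rightarrow> real \<Rightarrow> real \<Rightarrow> real \<Rightarrow> bool \<Rightarrow> bool \<Rightarrow> real" where
  "weak_value h1 h2 h3 h4 p q = (if p then (if q then h1 else h2) else (if q then h3 else h4))"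

text \<open>The root has no \<open>x\<^sub>\<down>\<close>; its value is forced by the consistency equation at \<open>e\<close>,
  all of whose \<open>k + 1\<close> successors have \<open>x\<^sub>\<down> = e \<in> H\<^sub>A\<close>.\<close>
definition weak_field ::
    "nat \<Rightarrow> nat set \<Rightarrow> real \<Rightarrow> real \<Rightarrow> real \<Rightarrow> real \<Rightarrow> real \<Rightarrow> nat list \<Rightarrow> real" where
  "weak_field k A \<theta> h1 h2 h3 h4 x =
     (if x \<notin> cayley_vertices k then 0
      else if x = [] then f_ising h1 \<theta> + real k * f_ising h3 \<theta>
      else weak_value h1 h2 h3 h4 (even_letters A x) (even_letters A (butlast x)))"

definition wp_system :: "nat \<Rightarrow> real \<Rightarrow> real \<Rightarrow> real \<Rightarrow> real \<Rightarrow> real \<Rightarrow> bool" where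
  "wp_system k \<theta> h1 h2 h3 h4 \<longleftrightarrow>
     h1 = real k * f_ising h3 \<theta> \<and>
     h2 = (real k - 1) * f_ising h3 \<theta> + f_ising h1 \<theta> \<and>
     h3 = (real k - 1) * f_ising h2 \<theta> + f_ising h4 \<theta> \<and>
     h4 = real k * f_ising h2 \<theta>"

lemma weakly_periodic_weak_field: "weakly_periodic k A (weak_field k A \<theta> h1 h2 h3 h4)"
  unfolding weakly_periodic_def
proof (intro exI ballI impI)
  fix x assume "x \<in> cayley_vertices k" "x \<noteq> []"
  then show "weak_field k A \<theta> h1 h2 h3 h4 x =
      (if x \<in> H_sub k A then (if pred_vertex x \<in> H_sub k A then h1 else h2)
       else (if pred_vertex x \<in> H_sub k A then h3 else h4))"
    using cayley_vertices_butlast[of x k]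
    by (simp add: weak_field_def weak_value_def H_sub_iff pred_vertex_def)
qed

lemma weak_field_snoc:
  assumes "finite A" and "x \<in> cayley_vertices k" and "i \<in> successor_letters k x"
  shows "weak_field k A \<theta> h1 h2 h3 h4 (x @ [i]) =
           weak_value h1 h2 h3 h4 (even_letters A x \<longleftrightarrow> i \<notin> A) (even_letters A x)"
  using cayley_vertices_snoc[OF assms(2)] assms(3)
  by (simp add: successor_letters_def weak_field_def even_letters_snoc[OF assms(1)])

lemma sum_successors_weak_field:
  assumes "finite A" and "x \<in> cayley_vertices k"
  shows "(\<Sum>y\<in>successors k x. f_ising (weak_field k A \<theta> h1 h2 h3 h4 y) \<theta>) =
      real (card (successor_letters k x \<inter> A)) *
        f_ising (weak_value h1 h2 h3 h4 (\<not> even_letters A x) (even_letters A x)) \<theta>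
    + real (card (successor_letters k x - A)) *
        f_ising (weak_value h1 h2 h3 h4 (even_letters A x) (even_letters A x)) \<theta>"
  (is "?lhs = _")
proof -
  let ?S = "successor_letters k x" and ?p = "even_letters A x"
  let ?G = "\<lambda>i. f_ising (weak_value h1 h2 h3 h4 (?p \<longleftrightarrow> i \<notin> A) ?p) \<theta>"
  have "?lhs = (\<Sum>i\<in>?S. ?G i)"
    unfolding sum_successors using weak_field_snoc[OF assms] by (intro sum.cong) auto
  also have "\<dots> = (\<Sum>i\<in>?S \<inter> A. ?G i) + (\<Sum>i\<in>?S - A. ?G i)"
    by (rule sum.Int_Diff) (simp add: successor_letters_def)
  finally show ?thesis by simp
qed

lemma consistent_field_weak_field:
  assumes A: "A \<subseteq> {1..k+1}" "card A = k" and sys: "wp_system k \<theta> h1 h2 h3 h4"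
  shows "consistent_field k \<theta> (weak_field k A \<theta> h1 h2 h3 h4)"
  unfolding consistent_field_def
proof
  fix x assume x: "x \<in> cayley_vertices k"
  let ?h = "weak_field k A \<theta> h1 h2 h3 h4" and ?S = "successor_letters k x"
  have fin: "finite A" using A(1) finite_subset by blast
  then have "card ({1..k+1} - A) = 1" using A by (simp add: card_Diff_subset)
  then obtain j where j: "{1..k+1} - A = {j}" by (rule card_1_singletonE)
  then have j_notin: "j \<notin> A" and gens: "{1..k+1} = insert j A" using A(1) by blast+
  note sum = sum_successors_weak_field[OF fin x, of \<theta> h1 h2 h3 h4]
  have e1: "h1 = real k * f_ising h3 \<theta>" and e2: "h2 = (real k - 1) * f_ising h3 \<theta> + f_ising h1 \<theta>"
    and e3: "h3 = (real k - 1) * f_ising h2 \<theta> + f_ising h4 \<theta>" and e4: "h4 = real k * f_ising h2 \<theta>"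
    using sys unfolding wp_system_def by blast+
  show "?h x = (\<Sum>y\<in>successors k x. f_ising (?h y) \<theta>)"
  proof (cases "x = []")
    case True
    then have "?S = insert j A" unfolding successor_letters_eq gens by simp
    then have "?S \<inter> A = A" "?S - A = {j}" using j_notin by blast+
    then show ?thesis using sum True x A(2) by (simp add: weak_field_def weak_value_def)
  next
    case False
    let ?l = "last x"
    have parity: "even_letters A (butlast x) \<longleftrightarrow> (even_letters A x \<longleftrightarrow> ?l \<notin> A)"
      using even_letters_snoc[OF fin, of "butlast x" ?l] False by auto
    have hx: "?h x = weak_value h1 h2 h3 h4 (even_letters A x) (even_letters A (butlast x))"
      using x False by (simp add: weak_field_def)
    show ?thesis
    proof (cases "?l \<in> A")
      case True
      moreover have "?S = insert j A - {?l}" using False unfolding successor_letters_eq gens by simp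
      ultimately have "?S \<inter> A = A - {?l}" "?S - A = {j}" using j_notin by blast+
      moreover have "0 < k" using True fin A(2) card_gt_0_iff by blast
      then have "real (card (A - {?l})) = real k - 1"
        using True fin A(2) by (simp add: card_Diff_singleton)
      ultimately have "(\<Sum>y\<in>successors k x. f_ising (?h y) \<theta>) =
          (real k - 1) * f_ising (weak_value h1 h2 h3 h4 (\<not> even_letters A x) (even_letters A x)) \<theta>
          + f_ising (weak_value h1 h2 h3 h4 (even_letters A x) (even_letters A x)) \<theta>"
        using sum by simp
      then show ?thesis using hx parity True
        by (cases "even_letters A x") (simp add: weak_value_def e2, simp add: weak_value_def e3)
    next
      case notin: False
      have "?l = j" using last_in_generators[OF x False] notin gens by blast
      moreover have "?S = insert j A - {?l}" using False unfolding successor_letters_eq gens by simp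
      ultimately have S_Int: "?S \<inter> A = A" and S_Diff: "?S - A = {}" using j_notin by blast+
      have "(\<Sum>y\<in>successors k x. f_ising (?h y) \<theta>) =
          real k * f_ising (weak_value h1 h2 h3 h4 (\<not> even_letters A x) (even_letters A x)) \<theta>"
        unfolding sum S_Int S_Diff A(2) by simp
      then show ?thesis using hx parity notin
        by (cases "even_letters A x") (simp add: weak_value_def e1, simp add: weak_value_def e4)
    qed
  qed
qed

lemma weak_field_in_wp_gibbs_fields:
  assumes "A \<subseteq> {1..k+1}" and "card A = k" and "wp_system k \<theta> h1 h2 h3 h4"
  shows "weak_field k A \<theta> h1 h2 h3 h4 \<in> wp_gibbs_fields k A \<theta>"
  using consistent_field_weak_field[OF assms] weakly_periodic_weak_field
  by (simp add: wp_gibbs_fields_def weak_field_def)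

lemma weak_field_generator:
  assumes "a \<in> A" and "a \<in> {1..k+1}" and "finite A"
  shows "weak_field k A \<theta> h1 h2 h3 h4 [a] = h3"
  using cayley_vertices_snoc[of "[]" k a] even_letters_snoc[OF assms(3), of "[]" a] assms
  by (simp add: weak_field_def weak_value_def cayley_vertices_def)

lemma wp_system_0: "wp_system k \<theta> 0 0 0 0"
  by (simp add: wp_system_def)

lemma wp_system_minus:
  assumes "\<bar>\<theta>\<bar> < 1" and "wp_system k \<theta> h1 h2 h3 h4"
  shows "wp_system k \<theta> (- h1) (- h2) (- h3) (- h4)"
  using assms(2) unfolding wp_system_def f_ising_minus[OF assms(1)] by argo

lemma wp_system_of_fixed_point:
  assumes "\<bar>\<theta>\<bar> < 1" and "h = -(real k - 1) * f_ising h \<theta> - f_ising (real k * f_ising h \<theta>) \<theta>"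
  shows "wp_system k \<theta> (- real k * f_ising h \<theta>) h (- h) (real k * f_ising h \<theta>)"
  using assms(2) unfolding wp_system_def f_ising_minus[OF assms(1)] mult_minus_left by argo

lemma three_wp_gibbs_fields_of_fixed_point:
  assumes A: "A \<subseteq> {1..k+1}" "card A = k" "0 < k" and \<theta>: "\<bar>\<theta>\<bar> < 1"
    and "h > 0" and fixed: "h = -(real k - 1) * f_ising h \<theta> - f_ising (real k * f_ising h \<theta>) \<theta>"
  shows "\<exists>h1 h2 h3. h1 \<in> wp_gibbs_fields k A \<theta> \<and> h2 \<in> wp_gibbs_fields k A \<theta> \<and>
      h3 \<in> wp_gibbs_fields k A \<theta> \<and> h1 \<noteq> h2 \<and> h1 \<noteq> h3 \<and> h2 \<noteq> h3"
proof -
  let ?field = "weak_field k A \<theta>"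
  define c where "c = real k * f_ising h \<theta>"
  have sys: "wp_system k \<theta> (- c) h (- h) c"
    using wp_system_of_fixed_point[OF \<theta> fixed] by (simp add: c_def)
  have "?field 0 0 0 0 \<in> wp_gibbs_fields k A \<theta>" "?field (- c) h (- h) c \<in> wp_gibbs_fields k A \<theta>"
    "?field c (- h) h (- c) \<in> wp_gibbs_fields k A \<theta>"
    using weak_field_in_wp_gibbs_fields[OF A(1,2)] wp_system_0 sys wp_system_minus[OF \<theta> sys]
    by simp_all
  moreover obtain a where a: "a \<in> A" using A(2,3) by fastforce
  have at_a: "?field h1 h2 h3 h4 [a] = h3" for h1 h2 h3 h4
    using weak_field_generator a A(1) finite_subset[OF A(1)] by blast
  have "?field 0 0 0 0 [a] \<noteq> ?field (- c) h (- h) c [a]"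
      "?field 0 0 0 0 [a] \<noteq> ?field c (- h) h (- c) [a]"
      "?field (- c) h (- h) c [a] \<noteq> ?field c (- h) h (- c) [a]"
    using \<open>h > 0\<close> by (simp_all add: at_a)
  ultimately show ?thesis
    by (intro exI[of _ "?field 0 0 0 0"] exI[of _ "?field (- c) h (- h) c"]
        exI[of _ "?field c (- h) h (- c)"]) auto
qed

text \<open>\<open>\<alpha>\<^sub>1, \<alpha>\<^sub>2\<close> are the roots of \<open>\<alpha>\<^sup>2 - (k - 1)\<alpha> + k\<close>, and substituting
  \<open>\<alpha> = (1 - \<theta>)/(1 + \<theta>)\<close> gives \<open>(\<alpha>\<^sup>2 - (k - 1)\<alpha> + k)(1 + \<theta>)\<^sup>2 = 2(1 + (k - 1)\<theta> + k\<theta>\<^sup>2)\<close>.\<close>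
lemma slope_gt_1_if_alpha_between_roots:
  fixes k \<alpha> \<theta> :: real
  assumes "\<alpha> * (1 + \<theta>) = 1 - \<theta>" and "1 + \<theta> > 0" and "0 \<le> k\<^sup>2 - 6 * k + 1"
    and "\<alpha> \<in> {(k - 1 - sqrt (k\<^sup>2 - 6 * k + 1)) / 2 <..< (k - 1 + sqrt (k\<^sup>2 - 6 * k + 1)) / 2}"
  shows "-(k - 1) * \<theta> - k * \<theta>\<^sup>2 > 1"
proof -
  define s where "s = sqrt (k\<^sup>2 - 6 * k + 1)"
  have s2: "s\<^sup>2 = k\<^sup>2 - 6 * k + 1" unfolding s_def using assms(3) by simp
  have "(\<alpha> - (k - 1 - s) / 2) * (\<alpha> - (k - 1 + s) / 2) < 0"
    using assms(4) unfolding s_def by (intro mult_pos_neg) auto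
  also have "(\<alpha> - (k - 1 - s) / 2) * (\<alpha> - (k - 1 + s) / 2) = \<alpha>\<^sup>2 - (k - 1) * \<alpha> + k"
    using s2 by (simp add: field_simps power2_eq_square)
  finally have "(\<alpha>\<^sup>2 - (k - 1) * \<alpha> + k) * (1 + \<theta>)\<^sup>2 < 0"
    using assms(2) by (intro mult_neg_pos) auto
  also have "(\<alpha>\<^sup>2 - (k - 1) * \<alpha> + k) * (1 + \<theta>)\<^sup>2
      = (\<alpha> * (1 + \<theta>))\<^sup>2 - (k - 1) * (\<alpha> * (1 + \<theta>)) * (1 + \<theta>) + k * (1 + \<theta>)\<^sup>2"
    by (simp add: power2_eq_square algebra_simps)
  also have "\<dots> = 2 * (1 + (k - 1) * \<theta> + k * \<theta>\<^sup>2)"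
    unfolding assms(1) by (simp add: power2_eq_square algebra_simps)
  finally show ?thesis by (simp add: algebra_simps)
qed

theorem theorem4:
  fixes k :: nat and J \<beta> \<theta> \<alpha> :: real and A :: "nat set"
  assumes "\<beta> > 0"
    and "\<theta> = tanh (J * \<beta>)"
    and "\<alpha> = (1 - \<theta>) / (1 + \<theta>)"
    and "A \<subseteq> {1..k+1}" and "card A = k"
    and "k \<ge> 6" and "\<alpha> > 1"
  shows "(\<alpha> \<in> {(real k - 1 - sqrt (real k ^ 2 - 6 * real k + 1)) / 2 <..<
                (real k - 1 + sqrt (real k ^ 2 - 6 * real k + 1)) / 2} \<longrightarrow>
           (\<exists>h1 h2 h3. h1 \<in> wp_gibbs_fields k A \<theta> \<and> h2 \<in> wp_gibbs_fields k A \<theta> \<and>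
                h3 \<in> wp_gibbs_fields k A \<theta> \<and> h1 \<noteq> h2 \<and> h1 \<noteq> h3 \<and> h2 \<noteq> h3))
       \<and> (\<alpha> \<notin> {(real k - 1 - sqrt (real k ^ 2 - 6 * real k + 1)) / 2 <..<
                (real k - 1 + sqrt (real k ^ 2 - 6 * real k + 1)) / 2} \<longrightarrow>
           wp_gibbs_fields k A \<theta> \<noteq> {})"
proof -
  have \<theta>: "\<bar>\<theta>\<bar> < 1" using tanh_real_bounds[of "J * \<beta>"] assms(2) by auto
  have "weak_field k A \<theta> 0 0 0 0 \<in> wp_gibbs_fields k A \<theta>"
    using weak_field_in_wp_gibbs_fields[OF assms(4,5) wp_system_0] .
  moreover have "\<exists>h1 h2 h3. h1 \<in> wp_gibbs_fields k A \<theta> \<and> h2 \<in> wp_gibbs_fields k A \<theta> \<and>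
      h3 \<in> wp_gibbs_fields k A \<theta> \<and> h1 \<noteq> h2 \<and> h1 \<noteq> h3 \<and> h2 \<noteq> h3"
    if between: "\<alpha> \<in> {(real k - 1 - sqrt (real k ^ 2 - 6 * real k + 1)) / 2 <..<
                (real k - 1 + sqrt (real k ^ 2 - 6 * real k + 1)) / 2}"
  proof -
    have "\<alpha> * (1 + \<theta>) = 1 - \<theta>" "1 + \<theta> > 0" using assms(3) \<theta> by auto
    moreover have "0 \<le> real k * (real k - 6)" using assms(6) by simp
    then have "0 \<le> real k ^ 2 - 6 * real k + 1" by (simp add: power2_eq_square algebra_simps)
    ultimately obtain h where "h > 0"
      and "h = -(real k - 1) * f_ising h \<theta> - f_ising (real k * f_ising h \<theta>) \<theta>"
      using f_ising_positive_fixed_point[OF \<theta> slope_gt_1_if_alpha_between_roots[OF _ _ _ between]]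
      by blast
    then show ?thesis
      using three_wp_gibbs_fields_of_fixed_point[OF assms(4,5) _ \<theta>] assms(6) by simp
  qed
  ultimately show ?thesis by blast
qed

end
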